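(* Assume $a+b\le1$. Then the marginal law $\nu$ of $\omega$ under $\mathbf P$, viewed as a measure on subsets of $\mathsf E$, satisfies the FKG lattice condition: $\nu(\xi_1\cap\xi_2)\,\nu(\xi_1\cup\xi_2)\ge\nu(\xi_1)\,\nu(\xi_2)$ for all $\xi_1,\xi_2\subseteq\mathsf E$.
   Context: Let $M$ be a compact orientable surface without boundary, or the plane. Let $\mathsf G=(\mathsf V,\mathsf E)$ be a finite connected graph embedded in $M$ with all faces topological discs, and $\mathsf G^*=(\mathsf U,\mathsf E^* )$ its embedded dual ($\mathsf U$ = faces of $\mathsf G$); $e^*$ is the dual edge crossing $e$, $\xi^*=\{e^*:e\in\xi\}$. Fix integers $q,q'\ge1$, finite $Q,Q'\subset\mathbb C$ with $Q=-Q$, $Q'=-Q'$, $|Q|=q$, $|Q'|=q'$, and $a,b\in(0,1]$. For $\sigma:\mathsf V\to Q$, $\eta(\sigma)\subseteq\mathsf E^*$ is the set of $e^*$ whose primal $e$ has endpoints with different $\sigma$-values; for $\sigma':\mathsf U\to Q'$, $\eta(\sigma')\subseteq\mathsf E$ is the set of $e$ whose dual $e^*$ has endpoints with different $\sigma'$-values. $\mathbf P(\sigma,\sigma')\propto a^{|\eta(\sigma')|}b^{|\eta(\sigma)|}$ on $\Sigma=\{(\sigma,\sigma'):\eta(\sigma)^*\cap\eta(\sigma')=\emptyset\}$. Percolation (for $a+b\le1$): given $(\sigma,\sigma')$, every edge of $\eta(\sigma')$ and every dual edge of $\eta(\sigma)$ is open; for each pair $(e,e^* )$ with $e\notin\eta(\sigma')$,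 $e^*\notin\eta(\sigma)$, independently, ($e$ open, $e^*$ closed) w.p. $a$, ($e$ closed, $e^*$ open) w.p. $b$, both open w.p. $1-a-b$. $\omega\subseteq\mathsf E$ is the set of open primal edges; $\mathbf P$ is the joint law. *)

theory Defs
  imports "HOL-Analysis.Analysis"
begin

text \<open>
  Cellularly embedded graphs on compact orientable surfaces are encoded
  combinatorially by rotation systems (combinatorial maps, Heffter--Edmonds):
  a finite set of darts D, a fixed-point-free involution alpha (the two halves
  of an edge) and a permutation rho (cyclic order of darts around a vertex).  The dual edge e* of the edge e = {d, alpha d} joins the faces
  of d and of alpha d; we index dual edges by the primal edge they cross.
\<close>

definition orb :: "('d \<Rightarrow> 'd) \<Rightarrow> 'd \<Rightarrow> 'd set" where
  "orb f d = {(f ^^ n) d | n. True}"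

definition comb_map :: "'d set \<Rightarrow> ('d \<Rightarrow> 'd) \<Rightarrow> ('d \<Rightarrow> 'd) \<Rightarrow> bool" where
  "comb_map D alpha rho \<longleftrightarrow>
     finite D \<and> bij_betw alpha D D \<and> bij_betw rho D D \<and>
     (\<forall>d\<in>D. alpha d \<noteq> d \<and> alpha (alpha d) = d) \<and>
     (\<forall>d\<in>D. \<forall>d'\<in>D.
        (d, d') \<in> ({(x, rho x) | x. x \<in> D} \<union> {(x, alpha x) | x. x \<in> D})\<^sup>*)"

definition map_vertices :: "'d set \<Rightarrow> ('d \<Rightarrow> 'd) \<Rightarrow> 'd set set" where
  "map_vertices D rho = {orb rho d | d. d \<in> D}"

definition map_faces :: "'d set \<Rightarrow> ('d \<Rightarrow> 'd) \<Rightarrow> ('d \<Rightarrow> 'd) \<Rightarrow> 'd set set" where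
  "map_faces D alpha rho = {orb (rho \<circ> alpha) d | d. d \<in> D}"

definition map_edges :: "'d set \<Rightarrow> ('d \<Rightarrow> 'd) \<Rightarrow> 'd set set" where
  "map_edges D alpha = {{d, alpha d} | d. d \<in> D}"

definition etaV :: "'d set \<Rightarrow> ('d \<Rightarrow> 'd) \<Rightarrow> ('d \<Rightarrow> 'd) \<Rightarrow> ('d set \<Rightarrow> complex) \<Rightarrow> 'd set set" where
  "etaV D alpha rho s = {e \<in> map_edges D alpha. \<exists>d\<in>e. s (orb rho d) \<noteq> s (orb rho (alpha d))}"

definition etaU :: "'d set \<Rightarrow> ('d \<Rightarrow> 'd) \<Rightarrow> ('d \<Rightarrow> 'd) \<Rightarrow> ('d set \<Rightarrow> complex) \<Rightarrow> 'd set set" where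
  "etaU D alpha rho s' = {e \<in> map_edges D alpha.
      \<exists>d\<in>e. s' (orb (rho \<circ> alpha) d) \<noteq> s' (orb (rho \<circ> alpha) (alpha d))}"

definition spin_pairs ::
  "'d set \<Rightarrow> ('d \<Rightarrow> 'd) \<Rightarrow> ('d \<Rightarrow> 'd) \<Rightarrow> complex set \<Rightarrow> complex set
     \<Rightarrow> (('d set \<Rightarrow> complex) \<times> ('d set \<Rightarrow> complex)) set" where
  "spin_pairs D alpha rho Q Q' =
     {(s, s'). s \<in> (map_vertices D rho \<rightarrow>\<^sub>E Q) \<and> s' \<in> (map_faces D alpha rho \<rightarrow>\<^sub>E Q') \<and>
               etaV D alpha rho s \<inter> etaU D alpha rho s' = {}}"

definition spin_weight ::
  "'d set \<Rightarrow> ('d \<Rightarrow> 'd) \<Rightarrow> ('d \<Rightarrow> 'd) \<Rightarrow> real \<Rightarrow> real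
     \<Rightarrow> ('d set \<Rightarrow> complex) \<Rightarrow> ('d set \<Rightarrow> complex) \<Rightarrow> real" where
  "spin_weight D alpha rho a b s s' =
     a ^ card (etaU D alpha rho s') * b ^ card (etaV D alpha rho s)"

definition spin_law ::
  "'d set \<Rightarrow> ('d \<Rightarrow> 'd) \<Rightarrow> ('d \<Rightarrow> 'd) \<Rightarrow> complex set \<Rightarrow> complex set \<Rightarrow> real \<Rightarrow> real
     \<Rightarrow> ('d set \<Rightarrow> complex) \<Rightarrow> ('d set \<Rightarrow> complex) \<Rightarrow> real" where
  "spin_law D alpha rho Q Q' a b s s' =
     (if (s, s') \<in> spin_pairs D alpha rho Q Q' then
        spin_weight D alpha rho a b s s' /
        (\<Sum>(t, t')\<in>spin_pairs D alpha rho Q Q'. spin_weight D alpha rho a b t t')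
      else 0)"

text \<open>Conditional probability that the set of open primal edges equals omega,
  given (sigma, sigma'): edges of eta(sigma') are open, edges whose dual is in
  eta(sigma) are closed (only their dual is declared open), and every other
  edge is open with probability a + (1 - a - b) (states (open,closed) and
  (open,open)) and closed with probability b, independently.\<close>
definition perc_cond ::
  "'d set \<Rightarrow> ('d \<Rightarrow> 'd) \<Rightarrow> ('d \<Rightarrow> 'd) \<Rightarrow> real \<Rightarrow> real
     \<Rightarrow> ('d set \<Rightarrow> complex) \<Rightarrow> ('d set \<Rightarrow> complex) \<Rightarrow> 'd set set \<Rightarrow> real" where
  "perc_cond D alpha rho a b s s' omega =
     (\<Prod>e\<in>map_edges D alpha.
        if e \<in> etaU D alpha rho s' then (if e \<in> omega then 1 else 0)
        else if e \<in> etaV D alpha rho s then (if e \<in> omega then 0 else 1)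
        else if e \<in> omega then a + (1 - a - b) else b)"

definition omega_marginal ::
  "'d set \<Rightarrow> ('d \<Rightarrow> 'd) \<Rightarrow> ('d \<Rightarrow> 'd) \<Rightarrow> complex set \<Rightarrow> complex set \<Rightarrow> real \<Rightarrow> real
     \<Rightarrow> 'd set set \<Rightarrow> real" where
  "omega_marginal D alpha rho Q Q' a b omega =
     (\<Sum>(s, s')\<in>spin_pairs D alpha rho Q Q'.
        spin_law D alpha rho Q Q' a b s s' * perc_cond D alpha rho a b s s' omega)"

end

theory Submission
  imports Defs
begin

(* Summing out the spins writes the marginal of omega as a sum over theta, a subset of omega, of
   the coupled weight b^|E - omega| a^|theta| (1-a-b)^|omega - theta| N(omega) N'(E - theta), where
   N(A) = q^k(A) counts the spin configurations constant on the clusters of A and N' does the same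
   on the dual map. For a + b <= 1 this weight is nonnegative and log-supermodular in the pair
   (omega, theta): the monomial is log-modular, and N, N' are supermodular because adding an edge
   to A either leaves N unchanged or divides it by q, and the first case only becomes more likely
   as A grows. The four functions theorem of Ahlswede and Daykin, applied to the sum over theta,
   gives the FKG lattice condition for the marginal. *)

section \<open>Colourings constant along a relation\<close>

definition agreeing_maps :: "'v set \<Rightarrow> 'c set \<Rightarrow> ('v \<times> 'v) set \<Rightarrow> ('v \<Rightarrow> 'c) set" where
  "agreeing_maps W Q P = {s \<in> W \<rightarrow>\<^sub>E Q. \<forall>(x, y)\<in>P. s x = s y}"

lemma agreeing_maps_rtrancl:
  assumes "s \<in> agreeing_maps W Q P" and "(x, y) \<in> (P \<union> P\<inverse>)\<^sup>*"
  shows "s x = s y"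
  using assms(2)
proof (induction rule: rtrancl_induct)
  case (step y z)
  then show ?case using assms(1) unfolding agreeing_maps_def by force
qed simp

lemma agreeing_maps_antimono: "P \<subseteq> P' \<Longrightarrow> agreeing_maps W Q P' \<subseteq> agreeing_maps W Q P"
  unfolding agreeing_maps_def by blast

lemma agreeing_maps_insert_iff:
  "s \<in> agreeing_maps W Q (insert (u, v) P) \<longleftrightarrow> s \<in> agreeing_maps W Q P \<and> s u = s v"
  unfolding agreeing_maps_def by auto

lemma finite_agreeing_maps: "finite W \<Longrightarrow> finite Q \<Longrightarrow> finite (agreeing_maps W Q P)"
  unfolding agreeing_maps_def by (rule finite_subset[OF _ finite_PiE]) auto

lemma card_agreeing_maps_pos:
  assumes "finite W" "finite Q" "Q \<noteq> {}" "P \<subseteq> W \<times> W"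
  shows "card (agreeing_maps W Q P) > 0"
proof -
  obtain c where "c \<in> Q" using assms(3) by blast
  then have "restrict (\<lambda>_. c) W \<in> agreeing_maps W Q P"
    unfolding agreeing_maps_def using assms(4) by fastforce
  then show ?thesis using finite_agreeing_maps[OF assms(1,2)] card_gt_0_iff by blast
qed

lemma agreeing_maps_insert_linked:
  assumes "(v, u) \<in> (P \<union> P\<inverse>)\<^sup>*"
  shows "agreeing_maps W Q (insert (u, v) P) = agreeing_maps W Q P"
  unfolding set_eq_iff agreeing_maps_insert_iff using agreeing_maps_rtrancl[OF _ assms] by metis

text \<open>A colouring agreeing along P is one that also agrees at (u, v), with the component of v
  recoloured by an arbitrary colour.\<close>

lemma card_agreeing_maps_insert_unlinked:
  assumes PW: "P \<subseteq> W \<times> W" and uW: "u \<in> W" and vW: "v \<in> W"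
    and unlinked: "(v, u) \<notin> (P \<union> P\<inverse>)\<^sup>*"
  shows "card (agreeing_maps W Q (insert (u, v) P)) * card Q = card (agreeing_maps W Q P)"
proof -
  define C where "C = {w \<in> W. (v, w) \<in> (P \<union> P\<inverse>)\<^sup>*}"
  define recol where "recol s c = (\<lambda>w. if w \<in> C then c else s w)" for s :: "'a \<Rightarrow> 'b" and c
  let ?S = "agreeing_maps W Q P" and ?S' = "agreeing_maps W Q (insert (u, v) P)"
  have vC: "v \<in> C" and uC: "u \<notin> C" using vW unlinked by (auto simp: C_def)
  have C_closed: "x \<in> C \<longleftrightarrow> y \<in> C" if "(x, y) \<in> P" for x y
    using that PW unfolding C_def by (blast intro: rtrancl_into_rtrancl)
  have const_on_C: "s w = s v" if "s \<in> ?S" "w \<in> C" for s w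
    using agreeing_maps_rtrancl[OF that(1)] that(2) unfolding C_def by auto
  have recol_in: "recol s c \<in> ?S" if "s \<in> ?S" "c \<in> Q" for s c
    using that C_closed unfolding agreeing_maps_def recol_def C_def
    by (force simp: PiE_def Pi_def extensional_def)
  have recol_recol: "recol (recol s c) c' = recol s c'" for s c c'
    unfolding recol_def by auto
  have recol_id: "recol s (s v) = s" if "s \<in> ?S" for s
    using const_on_C[OF that] unfolding recol_def by auto
  have "bij_betw (\<lambda>(s, c). recol s c) (?S' \<times> Q) ?S"
  proof (rule bij_betw_byWitness[where f' = "\<lambda>s. (recol s (s u), s v)"])
    show "\<forall>x\<in>?S' \<times> Q. (\<lambda>s. (recol s (s u), s v)) ((\<lambda>(s, c). recol s c) x) = x"
      using uC vC recol_id by (auto simp: recol_recol agreeing_maps_insert_iff) (auto simp: recol_def)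
    show "\<forall>s\<in>?S. (\<lambda>(s, c). recol s c) (recol s (s u), s v) = s"
      using recol_id by (simp add: recol_recol)
    show "(\<lambda>(s, c). recol s c) ` (?S' \<times> Q) \<subseteq> ?S"
      using recol_in by (auto simp: agreeing_maps_insert_iff)
    have "recol s (s u) \<in> ?S'" if "s \<in> ?S" for s
    proof -
      have "s u \<in> Q" using that uW by (auto simp: agreeing_maps_def)
      then have "recol s (s u) \<in> ?S" using recol_in that by blast
      moreover have "recol s (s u) u = recol s (s u) v" using uC vC by (simp add: recol_def)
      ultimately show ?thesis by (simp add: agreeing_maps_insert_iff)
    qed
    then show "(\<lambda>s. (recol s (s u), s v)) ` ?S \<subseteq> ?S' \<times> Q"
      using vW by (auto simp: agreeing_maps_def)
  qed
  then show ?thesis by (metis bij_betw_same_card card_cartesian_product)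
qed

lemma card_agreeing_maps_le_insert:
  assumes "P \<subseteq> W \<times> W" "u \<in> W" "v \<in> W" "finite Q" "Q \<noteq> {}"
  shows "card (agreeing_maps W Q P) \<le> card (agreeing_maps W Q (insert (u, v) P)) * card Q"
proof (cases "(v, u) \<in> (P \<union> P\<inverse>)\<^sup>*")
  case True
  have "card Q \<ge> 1" using assms(4,5) by (simp add: Suc_le_eq card_gt_0_iff)
  then show ?thesis unfolding agreeing_maps_insert_linked[OF True] by simp
next
  case False
  then show ?thesis by (simp add: card_agreeing_maps_insert_unlinked[OF assms(1-3) False])
qed

lemma card_agreeing_maps_insert_mono:
  assumes "finite Q" "Q \<noteq> {}" and "P \<subseteq> P'" "P' \<subseteq> W \<times> W" and "u \<in> W" "v \<in> W"
  shows "card (agreeing_maps W Q (insert (u, v) P)) * card (agreeing_maps W Q P')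
         \<le> card (agreeing_maps W Q (insert (u, v) P')) * card (agreeing_maps W Q P)"
proof (cases "(v, u) \<in> (P \<union> P\<inverse>)\<^sup>*")
  case True
  then have "(v, u) \<in> (P' \<union> P'\<inverse>)\<^sup>*"
    using rtrancl_mono[of "P \<union> P\<inverse>" "P' \<union> P'\<inverse>"] assms(3) by blast
  then show ?thesis using True by (simp add: agreeing_maps_insert_linked)
next
  case False
  let ?N = "\<lambda>P. card (agreeing_maps W Q P)"
  have "P \<subseteq> W \<times> W" using assms(3,4) by blast
  then have "card Q * (?N (insert (u, v) P) * ?N P') = ?N P * ?N P'"
    using card_agreeing_maps_insert_unlinked[of P W u v Q] False assms(5,6) by (simp add: mult_ac)
  also have "\<dots> \<le> ?N P * (?N (insert (u, v) P') * card Q)"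
    using card_agreeing_maps_le_insert[of P' W u v Q] assms by simp
  also have "\<dots> = card Q * (?N (insert (u, v) P') * ?N P)" by simp
  finally show ?thesis using assms(1,2) by (simp add: card_gt_0_iff)
qed

lemma card_agreeing_maps_Un_mono:
  assumes "finite Q" "Q \<noteq> {}" "finite W" and "finite T" "T \<subseteq> W \<times> W"
    and "P \<subseteq> P'" "P' \<subseteq> W \<times> W"
  shows "card (agreeing_maps W Q (P \<union> T)) * card (agreeing_maps W Q P')
         \<le> card (agreeing_maps W Q (P' \<union> T)) * card (agreeing_maps W Q P)"
  using assms(4,5)
proof (induction T rule: finite_induct)
  case (insert t T)
  obtain u v where t: "t = (u, v)" by (cases t)
  let ?N = "\<lambda>P. card (agreeing_maps W Q P)"
  have T: "T \<subseteq> W \<times> W" and uv: "u \<in> W" "v \<in> W" using insert.prems t by auto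
  have PT: "P \<union> T \<subseteq> W \<times> W" and PT': "P' \<union> T \<subseteq> W \<times> W" using T assms(6,7) by auto
  have step: "?N (insert t (P \<union> T)) * ?N (P' \<union> T) \<le> ?N (insert t (P' \<union> T)) * ?N (P \<union> T)"
    unfolding t using assms(1,2,6) PT' uv by (intro card_agreeing_maps_insert_mono) auto
  have IH: "?N (P \<union> T) * ?N P' \<le> ?N (P' \<union> T) * ?N P"
    using insert.IH T by blast
  have pos: "?N (P' \<union> T) * ?N (P \<union> T) > 0"
    using card_agreeing_maps_pos[OF assms(3,1,2) PT] card_agreeing_maps_pos[OF assms(3,1,2) PT']
    by simp
  define x where "x = ?N (insert t (P \<union> T))"
  define y where "y = ?N (insert t (P' \<union> T))"
  define z where "z = ?N (P \<union> T)"
  define z' where "z' = ?N (P' \<union> T)"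
  have "(x * ?N P') * (z' * z) = (x * z') * (z * ?N P')" by (simp only: ac_simps)
  also have "\<dots> \<le> (y * z) * (z' * ?N P)"
    using step IH unfolding x_def y_def z_def z'_def by (rule mult_le_mono)
  also have "\<dots> = (y * ?N P) * (z' * z)" by (simp only: ac_simps)
  finally show ?case using pos unfolding x_def y_def z_def z'_def by simp
qed (simp add: mult.commute)

lemma card_agreeing_maps_supermodular:
  assumes "finite Q" "Q \<noteq> {}" "finite W" and "P1 \<subseteq> W \<times> W" "P2 \<subseteq> W \<times> W" "finite P2"
  shows "card (agreeing_maps W Q P1) * card (agreeing_maps W Q P2)
         \<le> card (agreeing_maps W Q (P1 \<inter> P2)) * card (agreeing_maps W Q (P1 \<union> P2))"
  using card_agreeing_maps_Un_mono[of Q W P2 "P1 \<inter> P2" P1] assms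
  by (simp add: Un_absorb1 mult.commute)

definition dart_links :: "('d \<Rightarrow> 'v) \<Rightarrow> ('d \<Rightarrow> 'd) \<Rightarrow> 'd set set \<Rightarrow> ('v \<times> 'v) set" where
  "dart_links pm alpha A = (\<lambda>d. (pm d, pm (alpha d))) ` \<Union>A"

lemma card_agreeing_dart_links_supermodular:
  assumes "finite Q" "Q \<noteq> {}" "finite W" "finite (\<Union>E)"
    and "\<And>d. d \<in> \<Union>E \<Longrightarrow> pm d \<in> W \<and> pm (alpha d) \<in> W"
    and "A \<subseteq> E" "B \<subseteq> E"
  shows "card (agreeing_maps W Q (dart_links pm alpha A)) * card (agreeing_maps W Q (dart_links pm alpha B))
         \<le> card (agreeing_maps W Q (dart_links pm alpha (A \<inter> B)))
           * card (agreeing_maps W Q (dart_links pm alpha (A \<union> B)))"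
proof -
  let ?L = "dart_links pm alpha" and ?N = "\<lambda>P. card (agreeing_maps W Q P)"
  have links_W: "?L X \<subseteq> W \<times> W" if "X \<subseteq> E" for X
    using that assms(5) by (auto simp: dart_links_def)
  have "finite (\<Union>B)" using assms(4,7) by (meson Union_mono finite_subset)
  then have "finite (?L B)" unfolding dart_links_def by blast
  then have "?N (?L A) * ?N (?L B) \<le> ?N (?L A \<inter> ?L B) * ?N (?L A \<union> ?L B)"
    using card_agreeing_maps_supermodular assms(1-3) links_W assms(6,7) by blast
  also have "?L A \<union> ?L B = ?L (A \<union> B)" by (auto simp: dart_links_def)
  also have "?N (?L A \<inter> ?L B) \<le> ?N (?L (A \<inter> B))"
  proof (rule card_mono[OF finite_agreeing_maps[OF assms(3,1)]], rule agreeing_maps_antimono)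
    show "?L (A \<inter> B) \<subseteq> ?L A \<inter> ?L B" by (auto simp: dart_links_def)
  qed
  finally show ?thesis by simp
qed

section \<open>The four functions theorem\<close>

lemma four_functions_two_point:
  fixes a0 a1 b0 b1 c0 c1 d0 d1 :: real
  assumes "0 \<le> a0" "0 \<le> a1" "0 \<le> b0" "0 \<le> b1" "0 \<le> c0" "0 \<le> c1" "0 \<le> d0" "0 \<le> d1"
    and h00: "a0 * b0 \<le> c0 * d0" and h01: "a0 * b1 \<le> c0 * d1" and h10: "a1 * b0 \<le> c0 * d1"
    and h11: "a1 * b1 \<le> c1 * d1"
  shows "(a0 + a1) * (b0 + b1) \<le> (c0 + c1) * (d0 + d1)"
proof -
  have cross: "a0 * b1 + a1 * b0 \<le> c0 * d1 + c1 * d0"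
  proof (cases "c0 * d1 = 0")
    case True
    then show ?thesis using h01 h10 mult_nonneg_nonneg[OF assms(6,7)] by linarith
  next
    case False
    let ?w = "c0 * d1"
    have "(a0 * b1) * (a1 * b0) = (a0 * b0) * (a1 * b1)" by simp
    also have "\<dots> \<le> (c0 * d0) * (c1 * d1)" using assms(1-8) by (intro mult_mono[OF h00 h11] mult_nonneg_nonneg)
    also have "\<dots> = ?w * (c1 * d0)" by simp
    finally have prod_le: "(a0 * b1) * (a1 * b0) \<le> ?w * (c1 * d0)" .
    have "0 \<le> (?w - a0 * b1) * (?w - a1 * b0)" using h01 h10 by simp
    then have "?w * (a0 * b1 + a1 * b0) \<le> ?w * ?w + (a0 * b1) * (a1 * b0)" by (simp add: algebra_simps)
    also have "\<dots> \<le> ?w * (?w + c1 * d0)" using prod_le by (simp add: algebra_simps)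
    finally show ?thesis using False assms(5,8) by (simp add: mult_le_cancel_left_pos)
  qed
  have "(a0 + a1) * (b0 + b1) = a0 * b0 + (a0 * b1 + a1 * b0) + a1 * b1"
    and "(c0 + c1) * (d0 + d1) = c0 * d0 + (c0 * d1 + c1 * d0) + c1 * d1"
    by (simp_all add: algebra_simps)
  then show ?thesis using h00 h11 cross by linarith
qed

lemma sum_Pow_insert:
  assumes "finite F" "x \<notin> F"
  shows "sum f (Pow (insert x F)) = (\<Sum>A\<in>Pow F. f A + f (insert x A))"
proof -
  have "sum f (Pow (insert x F)) = sum f (Pow F) + sum f (insert x ` Pow F)"
    unfolding Pow_insert by (rule sum.union_disjoint) (use assms in auto)
  also have "sum f (insert x ` Pow F) = (\<Sum>A\<in>Pow F. f (insert x A))"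
    by (subst sum.reindex) (use assms in \<open>auto intro!: inj_onI simp: o_def\<close>)
  finally show ?thesis by (simp add: sum.distrib)
qed

lemma ahlswede_daykin_four_functions:
  fixes f1 f2 f3 f4 :: "'a set \<Rightarrow> real"
  assumes "finite E"
    and "\<And>A B. A \<subseteq> E \<Longrightarrow> B \<subseteq> E \<Longrightarrow> f1 A * f2 B \<le> f3 (A \<inter> B) * f4 (A \<union> B)"
    and "\<And>A. A \<subseteq> E \<Longrightarrow> 0 \<le> f1 A \<and> 0 \<le> f2 A \<and> 0 \<le> f3 A \<and> 0 \<le> f4 A"
  shows "sum f1 (Pow E) * sum f2 (Pow E) \<le> sum f3 (Pow E) * sum f4 (Pow E)"
  using assms
proof (induction E arbitrary: f1 f2 f3 f4 rule: finite_induct)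
  case (insert x F)
  let ?fold = "\<lambda>f A. f A + f (insert x A)"
  have nonneg: "0 \<le> f1 A \<and> 0 \<le> f2 A \<and> 0 \<le> f3 A \<and> 0 \<le> f4 A" if "A \<subseteq> insert x F" for A
    using insert.prems(2) that by blast
  have "sum (?fold f1) (Pow F) * sum (?fold f2) (Pow F) \<le> sum (?fold f3) (Pow F) * sum (?fold f4) (Pow F)"
  proof (rule insert.IH)
    fix A B assume A: "A \<subseteq> F" and B: "B \<subseteq> F"
    then have "x \<notin> A" "x \<notin> B" using insert.hyps by auto
    then have eqs: "insert x A \<inter> B = A \<inter> B" "A \<inter> insert x B = A \<inter> B"
      "insert x A \<inter> insert x B = insert x (A \<inter> B)"
      "insert x A \<union> B = insert x (A \<union> B)" "A \<union> insert x B = insert x (A \<union> B)"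
      "insert x A \<union> insert x B = insert x (A \<union> B)" by auto
    have sub: "A \<subseteq> insert x F" "insert x A \<subseteq> insert x F" "B \<subseteq> insert x F" "insert x B \<subseteq> insert x F"
      "A \<inter> B \<subseteq> insert x F" "insert x (A \<inter> B) \<subseteq> insert x F"
      "A \<union> B \<subseteq> insert x F" "insert x (A \<union> B) \<subseteq> insert x F"
      using A B by auto
    note ineq = insert.prems(1)[OF sub(1) sub(3)] insert.prems(1)[OF sub(1) sub(4)]
      insert.prems(1)[OF sub(2) sub(3)] insert.prems(1)[OF sub(2) sub(4)]
    show "?fold f1 A * ?fold f2 B \<le> ?fold f3 (A \<inter> B) * ?fold f4 (A \<union> B)"
      using ineq unfolding eqs
      by (intro four_functions_two_point) (use nonneg[OF sub(1)] nonneg[OF sub(2)] nonneg[OF sub(3)]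
          nonneg[OF sub(4)] nonneg[OF sub(5)] nonneg[OF sub(6)] nonneg[OF sub(7)] nonneg[OF sub(8)] in auto)
  next
    fix A assume "A \<subseteq> F"
    then have "A \<subseteq> insert x F" "insert x A \<subseteq> insert x F" by auto
    then show "0 \<le> ?fold f1 A \<and> 0 \<le> ?fold f2 A \<and> 0 \<le> ?fold f3 A \<and> 0 \<le> ?fold f4 A"
      using nonneg by simp
  qed
  then show ?case by (simp only: sum_Pow_insert[OF insert.hyps])
qed simp

section \<open>A coupled weight on pairs of edge sets\<close>

text \<open>omega is the set of open primal edges and E - theta the set of open dual edges; an edge is
  primal-open only (weight a) on theta, open in both (weight c) on omega - theta, and dual-open
  only (weight b) off omega.\<close>

definition edge_state_weight :: "'e set \<Rightarrow> real \<Rightarrow> real \<Rightarrow> real \<Rightarrow> 'e set \<Rightarrow> 'e set \<Rightarrow> real" where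
  "edge_state_weight E a b c \<omega> \<theta> = b ^ card (E - \<omega>) * a ^ card \<theta> * c ^ card (\<omega> - \<theta>)"

definition coupled_weight ::
  "'e set \<Rightarrow> real \<Rightarrow> real \<Rightarrow> real \<Rightarrow> ('e set \<Rightarrow> real) \<Rightarrow> ('e set \<Rightarrow> real) \<Rightarrow> 'e set \<Rightarrow> 'e set \<Rightarrow> real"
  where
  "coupled_weight E a b c f g \<omega> \<theta> =
     (if \<theta> \<subseteq> \<omega> then edge_state_weight E a b c \<omega> \<theta> * f \<omega> * g (E - \<theta>) else 0)"

lemma card_Diff_Int_Un:
  assumes "finite \<omega>1" "finite \<omega>2" "\<theta>1 \<subseteq> \<omega>1" "\<theta>2 \<subseteq> \<omega>2"
  shows "card (\<omega>1 - \<theta>1) + card (\<omega>2 - \<theta>2) = card (\<omega>1 \<inter> \<omega>2 - \<theta>1 \<inter> \<theta>2) + card (\<omega>1 \<union> \<omega>2 - (\<theta>1 \<union> \<theta>2))"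
proof -
  have fin: "finite \<theta>1" "finite \<theta>2" using assms finite_subset by auto
  have sub: "\<theta>1 \<inter> \<theta>2 \<subseteq> \<omega>1 \<inter> \<omega>2" "\<theta>1 \<union> \<theta>2 \<subseteq> \<omega>1 \<union> \<omega>2" using assms(3,4) by auto
  have "card \<theta>1 \<le> card \<omega>1" "card \<theta>2 \<le> card \<omega>2"
    "card (\<theta>1 \<inter> \<theta>2) \<le> card (\<omega>1 \<inter> \<omega>2)" "card (\<theta>1 \<union> \<theta>2) \<le> card (\<omega>1 \<union> \<omega>2)"
    using assms sub by (simp_all add: card_mono)
  moreover have "card (\<omega>1 - \<theta>1) = card \<omega>1 - card \<theta>1" "card (\<omega>2 - \<theta>2) = card \<omega>2 - card \<theta>2"
    "card (\<omega>1 \<inter> \<omega>2 - \<theta>1 \<inter> \<theta>2) = card (\<omega>1 \<inter> \<omega>2) - card (\<theta>1 \<inter> \<theta>2)"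
    "card (\<omega>1 \<union> \<omega>2 - (\<theta>1 \<union> \<theta>2)) = card (\<omega>1 \<union> \<omega>2) - card (\<theta>1 \<union> \<theta>2)"
    using assms fin sub by (simp_all add: card_Diff_subset)
  ultimately show ?thesis using card_Un_Int[OF assms(1,2)] card_Un_Int[OF fin] by linarith
qed

lemma edge_state_weight_modular:
  assumes E: "finite E" and \<omega>: "\<omega>1 \<subseteq> E" "\<omega>2 \<subseteq> E" and \<theta>: "\<theta>1 \<subseteq> \<omega>1" "\<theta>2 \<subseteq> \<omega>2"
  shows "edge_state_weight E a b c \<omega>1 \<theta>1 * edge_state_weight E a b c \<omega>2 \<theta>2
       = edge_state_weight E a b c (\<omega>1 \<inter> \<omega>2) (\<theta>1 \<inter> \<theta>2) * edge_state_weight E a b c (\<omega>1 \<union> \<omega>2) (\<theta>1 \<union> \<theta>2)"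
proof -
  have fin: "finite \<omega>1" "finite \<omega>2" "finite \<theta>1" "finite \<theta>2"
    using \<omega> \<theta> E finite_subset by metis+
  have "edge_state_weight E a b c \<omega>1 \<theta>1 * edge_state_weight E a b c \<omega>2 \<theta>2
      = b ^ (card (E - \<omega>1) + card (E - \<omega>2)) * a ^ (card \<theta>1 + card \<theta>2)
        * c ^ (card (\<omega>1 - \<theta>1) + card (\<omega>2 - \<theta>2))"
    unfolding edge_state_weight_def power_add by (simp only: ac_simps)
  also have "\<dots> = b ^ (card (E - \<omega>1 \<inter> \<omega>2) + card (E - (\<omega>1 \<union> \<omega>2)))
        * a ^ (card (\<theta>1 \<union> \<theta>2) + card (\<theta>1 \<inter> \<theta>2))
        * c ^ (card (\<omega>1 \<inter> \<omega>2 - \<theta>1 \<inter> \<theta>2) + card (\<omega>1 \<union> \<omega>2 - (\<theta>1 \<union> \<theta>2)))"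
    using card_Diff_Int_Un[OF E E \<omega>] card_Diff_Int_Un[OF fin(1,2) \<theta>] card_Un_Int[OF fin(3,4)]
    by simp
  also have "\<dots> = edge_state_weight E a b c (\<omega>1 \<inter> \<omega>2) (\<theta>1 \<inter> \<theta>2) * edge_state_weight E a b c (\<omega>1 \<union> \<omega>2) (\<theta>1 \<union> \<theta>2)"
    unfolding edge_state_weight_def power_add by (simp only: ac_simps)
  finally show ?thesis .
qed

lemma coupled_weight_nonneg:
  assumes "0 \<le> a" "0 \<le> b" "0 \<le> c" "\<And>A. A \<subseteq> E \<Longrightarrow> 0 \<le> f A" "\<And>A. A \<subseteq> E \<Longrightarrow> 0 \<le> g A"
    and "\<omega> \<subseteq> E"
  shows "0 \<le> coupled_weight E a b c f g \<omega> \<theta>"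
  using assms by (simp add: coupled_weight_def edge_state_weight_def)

lemma coupled_weight_log_supermodular:
  assumes abc: "0 \<le> a" "0 \<le> b" "0 \<le> c" and E: "finite E"
    and f_nonneg: "\<And>A. A \<subseteq> E \<Longrightarrow> 0 \<le> f A" and g_nonneg: "\<And>A. A \<subseteq> E \<Longrightarrow> 0 \<le> g A"
    and f_super: "\<And>A B. A \<subseteq> E \<Longrightarrow> B \<subseteq> E \<Longrightarrow> f A * f B \<le> f (A \<inter> B) * f (A \<union> B)"
    and g_super: "\<And>A B. A \<subseteq> E \<Longrightarrow> B \<subseteq> E \<Longrightarrow> g A * g B \<le> g (A \<inter> B) * g (A \<union> B)"
    and \<omega>: "\<omega>1 \<subseteq> E" "\<omega>2 \<subseteq> E"
  shows "coupled_weight E a b c f g \<omega>1 \<theta>1 * coupled_weight E a b c f g \<omega>2 \<theta>2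
         \<le> coupled_weight E a b c f g (\<omega>1 \<inter> \<omega>2) (\<theta>1 \<inter> \<theta>2)
           * coupled_weight E a b c f g (\<omega>1 \<union> \<omega>2) (\<theta>1 \<union> \<theta>2)"
proof (cases "\<theta>1 \<subseteq> \<omega>1 \<and> \<theta>2 \<subseteq> \<omega>2")
  case False
  have nonneg: "0 \<le> coupled_weight E a b c f g \<omega> \<theta>" if "\<omega> \<subseteq> E" for \<omega> \<theta>
    using coupled_weight_nonneg[of a b c E f g, OF abc f_nonneg g_nonneg that] .
  have "coupled_weight E a b c f g \<omega>1 \<theta>1 * coupled_weight E a b c f g \<omega>2 \<theta>2 = 0"
    using False by (auto simp: coupled_weight_def)
  also have "0 \<le> coupled_weight E a b c f g (\<omega>1 \<inter> \<omega>2) (\<theta>1 \<inter> \<theta>2)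
           * coupled_weight E a b c f g (\<omega>1 \<union> \<omega>2) (\<theta>1 \<union> \<theta>2)"
    using \<omega> by (intro mult_nonneg_nonneg nonneg) auto
  finally show ?thesis .
next
  case True
  then have \<theta>: "\<theta>1 \<subseteq> \<omega>1" "\<theta>2 \<subseteq> \<omega>2" by auto
  let ?m = "edge_state_weight E a b c"
  have g_super': "g (E - \<theta>1) * g (E - \<theta>2) \<le> g (E - (\<theta>1 \<inter> \<theta>2)) * g (E - (\<theta>1 \<union> \<theta>2))"
    using g_super[of "E - \<theta>1" "E - \<theta>2"] by (simp add: Diff_Int Diff_Un mult.commute)
  have fg: "(f \<omega>1 * f \<omega>2) * (g (E - \<theta>1) * g (E - \<theta>2))
      \<le> (f (\<omega>1 \<inter> \<omega>2) * f (\<omega>1 \<union> \<omega>2)) * (g (E - (\<theta>1 \<inter> \<theta>2)) * g (E - (\<theta>1 \<union> \<theta>2)))"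
    using \<omega> by (intro mult_mono f_super g_super' mult_nonneg_nonneg f_nonneg g_nonneg) auto
  have "coupled_weight E a b c f g \<omega>1 \<theta>1 * coupled_weight E a b c f g \<omega>2 \<theta>2
      = (?m \<omega>1 \<theta>1 * ?m \<omega>2 \<theta>2) * ((f \<omega>1 * f \<omega>2) * (g (E - \<theta>1) * g (E - \<theta>2)))"
    using \<theta> by (simp only: coupled_weight_def if_True ac_simps)
  also have "\<dots> \<le> (?m \<omega>1 \<theta>1 * ?m \<omega>2 \<theta>2)
      * ((f (\<omega>1 \<inter> \<omega>2) * f (\<omega>1 \<union> \<omega>2)) * (g (E - (\<theta>1 \<inter> \<theta>2)) * g (E - (\<theta>1 \<union> \<theta>2))))"
    using fg abc by (intro mult_left_mono) (simp_all add: edge_state_weight_def)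
  also have "\<dots> = coupled_weight E a b c f g (\<omega>1 \<inter> \<omega>2) (\<theta>1 \<inter> \<theta>2)
           * coupled_weight E a b c f g (\<omega>1 \<union> \<omega>2) (\<theta>1 \<union> \<theta>2)"
    using \<theta> Int_mono[OF \<theta>] Un_mono[OF \<theta>]
    by (simp only: coupled_weight_def if_True edge_state_weight_modular[OF E \<omega> \<theta>] ac_simps)
  finally show ?thesis .
qed

lemma prod_edge_states:
  fixes a b :: real
  assumes E: "finite E" and XU: "XU \<subseteq> E" and XV: "XV \<subseteq> E" and disj: "XU \<inter> XV = {}"
    and \<omega>: "\<omega> \<subseteq> E"
  shows "b ^ card XV * (\<Prod>e\<in>E. if e \<in> XU then (if e \<in> \<omega> then 1 else 0)
            else if e \<in> XV then (if e \<in> \<omega> then 0 else 1) else if e \<in> \<omega> then a + (1 - a - b) else b)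
       = (if XU \<subseteq> \<omega> \<and> XV \<inter> \<omega> = {} then (1 - b) ^ card (\<omega> - XU) * b ^ card (E - \<omega>) else 0)"
    (is "_ * prod ?h E = _")
proof (cases "XU \<subseteq> \<omega> \<and> XV \<inter> \<omega> = {}")
  case True
  have "prod ?h E = (\<Prod>e\<in>E. (if e \<in> \<omega> - XU then 1 - b else 1) * (if e \<in> E - \<omega> - XV then b else 1))"
    using True disj by (intro prod.cong) auto
  also have "\<dots> = (1 - b) ^ card (E \<inter> (\<omega> - XU)) * b ^ card (E \<inter> (E - \<omega> - XV))"
    by (simp only: prod.distrib prod.inter_restrict[OF E, symmetric] prod_constant)
  also have "E \<inter> (\<omega> - XU) = \<omega> - XU" using \<omega> by auto
  also have "E \<inter> (E - \<omega> - XV) = E - \<omega> - XV" by auto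
  finally have "prod ?h E = (1 - b) ^ card (\<omega> - XU) * b ^ card (E - \<omega> - XV)" .
  moreover have "card (E - \<omega>) = card XV + card (E - \<omega> - XV)"
  proof -
    have XV': "XV \<subseteq> E - \<omega>" and "finite XV" using True XV E finite_subset by auto
    then have "card (E - \<omega> - XV) = card (E - \<omega>) - card XV" by (simp add: card_Diff_subset)
    moreover have "card XV \<le> card (E - \<omega>)" using E XV' by (intro card_mono) auto
    ultimately show ?thesis by linarith
  qed
  ultimately show ?thesis using True by (simp add: power_add)
next
  case False
  then obtain e where "e \<in> XU - \<omega> \<or> e \<in> XV \<inter> \<omega>" by blast
  then have "e \<in> E" "?h e = 0" using XU XV disj by auto
  then have "prod ?h E = 0" using prod_zero_iff[OF E] by blast
  then show ?thesis by (simp only: if_not_P[OF False] mult_zero_right)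
qed

lemma binomial_sum_between:
  fixes a c :: real
  assumes Z: "finite Z" and "X \<subseteq> Y" "Y \<subseteq> Z"
  shows "a ^ card X * (a + c) ^ card (Y - X)
         = (\<Sum>\<theta>\<in>Pow Z. if X \<subseteq> \<theta> \<and> \<theta> \<subseteq> Y then a ^ card \<theta> * c ^ card (Y - \<theta>) else 0)"
proof -
  have finY: "finite Y" and finX: "finite X" using Z assms(2,3) finite_subset by metis+
  have "(a + c) ^ card (Y - X) = (\<Sum>T\<in>Pow (Y - X). a ^ card T * c ^ card (Y - X - T))"
    using prod_add[of "Y - X" "\<lambda>_. a" "\<lambda>_. c"] finY by simp
  then have "a ^ card X * (a + c) ^ card (Y - X)
      = (\<Sum>T\<in>Pow (Y - X). a ^ card X * (a ^ card T * c ^ card (Y - X - T)))"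
    by (simp add: sum_distrib_left)
  also have "\<dots> = (\<Sum>T\<in>Pow (Y - X). a ^ card (X \<union> T) * c ^ card (Y - (X \<union> T)))"
  proof (intro sum.cong refl)
    fix T assume "T \<in> Pow (Y - X)"
    moreover from this have "finite T" using finY finite_subset by auto
    ultimately have "card (X \<union> T) = card X + card T" using finX by (subst card_Un_disjoint) auto
    moreover have "Y - (X \<union> T) = Y - X - T" by blast
    ultimately show "a ^ card X * (a ^ card T * c ^ card (Y - X - T)) = a ^ card (X \<union> T) * c ^ card (Y - (X \<union> T))"
      by (simp add: power_add)
  qed
  also have "\<dots> = (\<Sum>\<theta>\<in>(\<union>) X ` Pow (Y - X). a ^ card \<theta> * c ^ card (Y - \<theta>))"
    by (rule sum.reindex[symmetric, unfolded comp_def]) (rule inj_onI, blast)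
  also have "(\<union>) X ` Pow (Y - X) = {\<theta> \<in> Pow Z. X \<subseteq> \<theta> \<and> \<theta> \<subseteq> Y}"
    using assms(2,3) by (auto intro!: image_eqI[where x = "_ - X"])
  finally show ?thesis by (simp only: sum.inter_filter[OF finite_Pow_iff[THEN iffD2, OF Z]])
qed

lemma sum_binomial_expansion:
  fixes a c :: real
  assumes "finite S" "finite E" "\<And>x. x \<in> S \<Longrightarrow> X x \<subseteq> E" "\<omega> \<subseteq> E"
  shows "(\<Sum>x\<in>S. if X x \<subseteq> \<omega> then a ^ card (X x) * (a + c) ^ card (\<omega> - X x) else 0)
       = (\<Sum>\<theta>\<in>Pow E. if \<theta> \<subseteq> \<omega> then a ^ card \<theta> * c ^ card (\<omega> - \<theta>) * card {x \<in> S. X x \<subseteq> \<theta>} else 0)"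
proof -
  have "(\<Sum>x\<in>S. if X x \<subseteq> \<omega> then a ^ card (X x) * (a + c) ^ card (\<omega> - X x) else 0)
      = (\<Sum>x\<in>S. \<Sum>\<theta>\<in>Pow E. if X x \<subseteq> \<theta> \<and> \<theta> \<subseteq> \<omega> then a ^ card \<theta> * c ^ card (\<omega> - \<theta>) else 0)"
  proof (intro sum.cong refl)
    fix x assume "x \<in> S"
    show "(if X x \<subseteq> \<omega> then a ^ card (X x) * (a + c) ^ card (\<omega> - X x) else 0)
        = (\<Sum>\<theta>\<in>Pow E. if X x \<subseteq> \<theta> \<and> \<theta> \<subseteq> \<omega> then a ^ card \<theta> * c ^ card (\<omega> - \<theta>) else 0)"
    proof (cases "X x \<subseteq> \<omega>")
      case True
      then show ?thesis using binomial_sum_between[OF assms(2) True assms(4)] by simp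
    next
      case False
      then have "\<forall>\<theta>\<in>Pow E. (if X x \<subseteq> \<theta> \<and> \<theta> \<subseteq> \<omega> then a ^ card \<theta> * c ^ card (\<omega> - \<theta>) else 0) = 0"
        by auto
      then show ?thesis using False sum.neutral by simp
    qed
  qed
  also have "\<dots> = (\<Sum>\<theta>\<in>Pow E. \<Sum>x\<in>S. if X x \<subseteq> \<theta> \<and> \<theta> \<subseteq> \<omega> then a ^ card \<theta> * c ^ card (\<omega> - \<theta>) else 0)"
    by (rule sum.swap)
  also have "\<dots> = (\<Sum>\<theta>\<in>Pow E. if \<theta> \<subseteq> \<omega> then a ^ card \<theta> * c ^ card (\<omega> - \<theta>) * card {x \<in> S. X x \<subseteq> \<theta>} else 0)"
    using assms(1) by (intro sum.cong refl) (simp add: sum.inter_filter[symmetric])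
  finally show ?thesis .
qed

lemma map_vertices_eq: "map_vertices D rho = orb rho ` D"
  unfolding map_vertices_def by blast

lemma map_faces_eq: "map_faces D alpha rho = orb (rho \<circ> alpha) ` D"
  unfolding map_faces_def by blast

lemma Union_map_edges_subset:
  assumes "comb_map D alpha rho"
  shows "\<Union>(map_edges D alpha) \<subseteq> D"
  using assms unfolding comb_map_def map_edges_def by (auto dest: bij_betw_apply)

lemma comb_map_finite:
  assumes "comb_map D alpha rho"
  shows "finite (map_edges D alpha)" "finite (\<Union>(map_edges D alpha))"
    "finite (map_vertices D rho)" "finite (map_faces D alpha rho)"
proof -
  have D: "finite D" using assms by (simp add: comb_map_def)
  have "map_edges D alpha = (\<lambda>d. {d, alpha d}) ` D" unfolding map_edges_def by blast
  then show "finite (map_edges D alpha)" using D by simp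
  show "finite (\<Union>(map_edges D alpha))" using Union_map_edges_subset[OF assms] D by (rule finite_subset)
  show "finite (map_vertices D rho)" "finite (map_faces D alpha rho)"
    using D by (simp_all add: map_vertices_eq map_faces_eq)
qed

lemma comb_map_dart_ends:
  assumes "comb_map D alpha rho" "d \<in> \<Union>(map_edges D alpha)"
  shows "orb rho d \<in> map_vertices D rho \<and> orb rho (alpha d) \<in> map_vertices D rho"
    and "orb (rho \<circ> alpha) d \<in> map_faces D alpha rho \<and> orb (rho \<circ> alpha) (alpha d) \<in> map_faces D alpha rho"
proof -
  have "d \<in> D" "alpha d \<in> D"
    using assms Union_map_edges_subset[OF assms(1)] unfolding comb_map_def by (auto dest: bij_betw_apply)
  then show "orb rho d \<in> map_vertices D rho \<and> orb rho (alpha d) \<in> map_vertices D rho"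
    and "orb (rho \<circ> alpha) d \<in> map_faces D alpha rho \<and> orb (rho \<circ> alpha) (alpha d) \<in> map_faces D alpha rho"
    by (simp_all add: map_vertices_eq map_faces_eq)
qed

text \<open>primal_spin_count A = card Q ^ k(A) with k(A) the number of clusters of the primal edges A;
  dual_spin_count is the same on the dual map.\<close>

definition primal_spin_count :: "'d set \<Rightarrow> ('d \<Rightarrow> 'd) \<Rightarrow> ('d \<Rightarrow> 'd) \<Rightarrow> 'c set \<Rightarrow> 'd set set \<Rightarrow> nat" where
  "primal_spin_count D alpha rho Q A =
     card (agreeing_maps (map_vertices D rho) Q (dart_links (orb rho) alpha A))"

definition dual_spin_count :: "'d set \<Rightarrow> ('d \<Rightarrow> 'd) \<Rightarrow> ('d \<Rightarrow> 'd) \<Rightarrow> 'c set \<Rightarrow> 'd set set \<Rightarrow> nat" where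
  "dual_spin_count D alpha rho Q' A =
     card (agreeing_maps (map_faces D alpha rho) Q' (dart_links (orb (rho \<circ> alpha)) alpha A))"

lemma card_etaV_disjoint:
  assumes "A \<subseteq> map_edges D alpha"
  shows "card {s \<in> map_vertices D rho \<rightarrow>\<^sub>E Q. etaV D alpha rho s \<inter> A = {}} = primal_spin_count D alpha rho Q A"
proof -
  have "etaV D alpha rho s \<inter> A = {} \<longleftrightarrow> (\<forall>(x, y)\<in>dart_links (orb rho) alpha A. s x = s y)" for s
    using assms unfolding etaV_def dart_links_def by blast
  then show ?thesis unfolding primal_spin_count_def agreeing_maps_def by simp
qed

lemma card_etaU_disjoint:
  assumes "A \<subseteq> map_edges D alpha"
  shows "card {s' \<in> map_faces D alpha rho \<rightarrow>\<^sub>E Q'. etaU D alpha rho s' \<inter> A = {}} = dual_spin_count D alpha rho Q' A"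
proof -
  have "etaU D alpha rho s' \<inter> A = {} \<longleftrightarrow> (\<forall>(x, y)\<in>dart_links (orb (rho \<circ> alpha)) alpha A. s' x = s' y)" for s'
    using assms unfolding etaU_def dart_links_def by blast
  then show ?thesis unfolding dual_spin_count_def agreeing_maps_def by simp
qed

lemma primal_spin_count_supermodular:
  assumes "comb_map D alpha rho" "finite Q" "Q \<noteq> {}" "A \<subseteq> map_edges D alpha" "B \<subseteq> map_edges D alpha"
  shows "primal_spin_count D alpha rho Q A * primal_spin_count D alpha rho Q B
         \<le> primal_spin_count D alpha rho Q (A \<inter> B) * primal_spin_count D alpha rho Q (A \<union> B)"
  unfolding primal_spin_count_def
  by (rule card_agreeing_dart_links_supermodular[where pm = "orb rho" and alpha = alpha,
        OF assms(2,3) comb_map_finite(3,2)[OF assms(1)]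
        comb_map_dart_ends(1)[OF assms(1)] assms(4,5)])

lemma dual_spin_count_supermodular:
  assumes "comb_map D alpha rho" "finite Q'" "Q' \<noteq> {}" "A \<subseteq> map_edges D alpha" "B \<subseteq> map_edges D alpha"
  shows "dual_spin_count D alpha rho Q' A * dual_spin_count D alpha rho Q' B
         \<le> dual_spin_count D alpha rho Q' (A \<inter> B) * dual_spin_count D alpha rho Q' (A \<union> B)"
  unfolding dual_spin_count_def
  by (rule card_agreeing_dart_links_supermodular[where pm = "orb (rho \<circ> alpha)" and alpha = alpha,
        OF assms(2,3) comb_map_finite(4,2)[OF assms(1)]
        comb_map_dart_ends(2)[OF assms(1)] assms(4,5)])

section \<open>The marginal law of the open primal edges\<close>

lemma spin_weight_mult_perc_cond:
  fixes a b :: real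
  assumes E: "finite (map_edges D alpha)" and SP: "(s, s') \<in> spin_pairs D alpha rho Q Q'"
    and \<omega>: "\<omega> \<subseteq> map_edges D alpha"
  shows "spin_weight D alpha rho a b s s' * perc_cond D alpha rho a b s s' \<omega>
       = (if etaV D alpha rho s \<inter> \<omega> = {} then 1 else 0)
         * (if etaU D alpha rho s' \<subseteq> \<omega>
            then a ^ card (etaU D alpha rho s') * (1 - b) ^ card (\<omega> - etaU D alpha rho s') else 0)
         * b ^ card (map_edges D alpha - \<omega>)"
proof -
  have "etaU D alpha rho s' \<subseteq> map_edges D alpha" "etaV D alpha rho s \<subseteq> map_edges D alpha"
    unfolding etaU_def etaV_def by auto
  moreover have "etaU D alpha rho s' \<inter> etaV D alpha rho s = {}"
    using SP unfolding spin_pairs_def by blast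
  ultimately show ?thesis
    unfolding spin_weight_def perc_cond_def mult.assoc[of "a ^ _"]
    by (subst prod_edge_states[OF E _ _ _ \<omega>]) auto
qed

lemma sum_spin_pairs_factorise:
  fixes a b :: real
  assumes cm: "comb_map D alpha rho" and "finite Q" "finite Q'" and \<omega>: "\<omega> \<subseteq> map_edges D alpha"
  shows "(\<Sum>(s, s')\<in>spin_pairs D alpha rho Q Q'. spin_weight D alpha rho a b s s' * perc_cond D alpha rho a b s s' \<omega>)
       = primal_spin_count D alpha rho Q \<omega>
         * (\<Sum>s'\<in>map_faces D alpha rho \<rightarrow>\<^sub>E Q'. if etaU D alpha rho s' \<subseteq> \<omega>
              then a ^ card (etaU D alpha rho s') * (1 - b) ^ card (\<omega> - etaU D alpha rho s') else 0)
         * b ^ card (map_edges D alpha - \<omega>)"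
proof -
  let ?V = "map_vertices D rho \<rightarrow>\<^sub>E Q" and ?U = "map_faces D alpha rho \<rightarrow>\<^sub>E Q'"
  let ?I = "\<lambda>s. if etaV D alpha rho s \<inter> \<omega> = {} then 1 else (0::real)"
  let ?G = "\<lambda>s'. if etaU D alpha rho s' \<subseteq> \<omega>
              then a ^ card (etaU D alpha rho s') * (1 - b) ^ card (\<omega> - etaU D alpha rho s') else 0"
  have fin: "finite ?V" "finite ?U" using comb_map_finite[OF cm] assms(2,3) by (simp_all add: finite_PiE)
  have SP: "spin_pairs D alpha rho Q Q' \<subseteq> ?V \<times> ?U" unfolding spin_pairs_def by auto
  have off: "?I s * ?G s' * b ^ card (map_edges D alpha - \<omega>) = 0"
    if "(s, s') \<notin> spin_pairs D alpha rho Q Q'" "s \<in> ?V" "s' \<in> ?U" for s s'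
  proof -
    have "etaV D alpha rho s \<inter> etaU D alpha rho s' \<noteq> {}" using that by (simp add: spin_pairs_def)
    then have "\<not> (etaV D alpha rho s \<inter> \<omega> = {} \<and> etaU D alpha rho s' \<subseteq> \<omega>)" by blast
    then show ?thesis by auto
  qed
  have "(\<Sum>(s, s')\<in>spin_pairs D alpha rho Q Q'. spin_weight D alpha rho a b s s' * perc_cond D alpha rho a b s s' \<omega>)
      = (\<Sum>(s, s')\<in>spin_pairs D alpha rho Q Q'. ?I s * ?G s' * b ^ card (map_edges D alpha - \<omega>))"
    using spin_weight_mult_perc_cond[OF comb_map_finite(1)[OF cm] _ \<omega>] by (intro sum.cong) auto
  also have "\<dots> = (\<Sum>(s, s')\<in>?V \<times> ?U. ?I s * ?G s' * b ^ card (map_edges D alpha - \<omega>))"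
    by (rule sum.mono_neutral_left[OF _ SP]) (use fin off in auto)
  also have "\<dots> = sum ?I ?V * sum (\<lambda>s'. ?G s' * b ^ card (map_edges D alpha - \<omega>)) ?U"
    unfolding sum.cartesian_product[symmetric] sum_product by (simp only: mult.assoc)
  also have "\<dots> = sum ?I ?V * sum ?G ?U * b ^ card (map_edges D alpha - \<omega>)"
    by (simp only: mult.assoc sum_distrib_right)
  also have "sum ?I ?V = primal_spin_count D alpha rho Q \<omega>"
    using fin(1) card_etaV_disjoint[OF \<omega>] by (simp add: sum.inter_filter[symmetric])
  finally show ?thesis .
qed

lemma sum_dual_spins_expand:
  fixes a b :: real
  assumes cm: "comb_map D alpha rho" and "finite Q'" and \<omega>: "\<omega> \<subseteq> map_edges D alpha"
  shows "(\<Sum>s'\<in>map_faces D alpha rho \<rightarrow>\<^sub>E Q'. if etaU D alpha rho s' \<subseteq> \<omega>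
            then a ^ card (etaU D alpha rho s') * (1 - b) ^ card (\<omega> - etaU D alpha rho s') else 0)
       = (\<Sum>\<theta>\<in>Pow (map_edges D alpha). if \<theta> \<subseteq> \<omega>
            then a ^ card \<theta> * (1 - a - b) ^ card (\<omega> - \<theta>)
                 * dual_spin_count D alpha rho Q' (map_edges D alpha - \<theta>) else 0)"
proof -
  let ?E = "map_edges D alpha"
  have etaU: "etaU D alpha rho s' \<subseteq> ?E" for s' unfolding etaU_def by auto
  have "card {s' \<in> map_faces D alpha rho \<rightarrow>\<^sub>E Q'. etaU D alpha rho s' \<subseteq> \<theta>}
      = dual_spin_count D alpha rho Q' (?E - \<theta>)" for \<theta>
  proof -
    have "{s' \<in> map_faces D alpha rho \<rightarrow>\<^sub>E Q'. etaU D alpha rho s' \<subseteq> \<theta>}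
        = {s' \<in> map_faces D alpha rho \<rightarrow>\<^sub>E Q'. etaU D alpha rho s' \<inter> (?E - \<theta>) = {}}"
      using etaU by blast
    then show ?thesis using card_etaU_disjoint[of "?E - \<theta>" D alpha rho Q'] by simp
  qed
  moreover have "a + (1 - a - b) = 1 - b" by simp
  ultimately show ?thesis
    using sum_binomial_expansion[of "map_faces D alpha rho \<rightarrow>\<^sub>E Q'" ?E "etaU D alpha rho" \<omega> a "1 - a - b"]
      comb_map_finite[OF cm] assms(2) \<omega> etaU
    by (simp only: finite_PiE)
qed

lemma sum_spin_pairs_eq_sum_coupled_weight:
  fixes a b :: real
  assumes cm: "comb_map D alpha rho" and "finite Q" "finite Q'" and \<omega>: "\<omega> \<subseteq> map_edges D alpha"
  shows "(\<Sum>(s, s')\<in>spin_pairs D alpha rho Q Q'. spin_weight D alpha rho a b s s' * perc_cond D alpha rho a b s s' \<omega>)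
       = (\<Sum>\<theta>\<in>Pow (map_edges D alpha). coupled_weight (map_edges D alpha) a b (1 - a - b)
            (\<lambda>A. primal_spin_count D alpha rho Q A) (\<lambda>A. dual_spin_count D alpha rho Q' A) \<omega> \<theta>)"
  unfolding sum_spin_pairs_factorise[OF assms] sum_dual_spins_expand[OF cm assms(3) \<omega>]
    sum_distrib_left sum_distrib_right
  by (intro sum.cong refl) (simp add: coupled_weight_def edge_state_weight_def mult_ac)

lemma omega_marginal_eq:
  "omega_marginal D alpha rho Q Q' a b \<omega>
   = (\<Sum>(s, s')\<in>spin_pairs D alpha rho Q Q'. spin_weight D alpha rho a b s s' * perc_cond D alpha rho a b s s' \<omega>)
     / (\<Sum>(s, s')\<in>spin_pairs D alpha rho Q Q'. spin_weight D alpha rho a b s s')"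
  unfolding omega_marginal_def spin_law_def sum_divide_distrib
  by (intro sum.cong) auto

theorem proposition4p2:
  fixes D :: "'d set" and alpha rho :: "'d \<Rightarrow> 'd"
    and Q Q' :: "complex set" and q q' :: nat and a b :: real
    and xi1 xi2 :: "'d set set"
  assumes "comb_map D alpha rho"
    and "finite Q" and "uminus ` Q = Q" and "card Q = q" and "q \<ge> 1"
    and "finite Q'" and "uminus ` Q' = Q'" and "card Q' = q'" and "q' \<ge> 1"
    and "0 < a" and "a \<le> 1" and "0 < b" and "b \<le> 1"
    and "a + b \<le> 1"
    and "xi1 \<subseteq> map_edges D alpha" and "xi2 \<subseteq> map_edges D alpha"
  shows "omega_marginal D alpha rho Q Q' a b (xi1 \<inter> xi2) *
           omega_marginal D alpha rho Q Q' a b (xi1 \<union> xi2)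
         \<ge> omega_marginal D alpha rho Q Q' a b xi1 *
           omega_marginal D alpha rho Q Q' a b xi2"
proof -
  let ?E = "map_edges D alpha"
  let ?f = "\<lambda>A. real (primal_spin_count D alpha rho Q A)"
  let ?g = "\<lambda>A. real (dual_spin_count D alpha rho Q' A)"
  define F where "F = coupled_weight ?E a b (1 - a - b) ?f ?g"
  define Z where "Z = (\<Sum>(s, s')\<in>spin_pairs D alpha rho Q Q'. spin_weight D alpha rho a b s s')"
  have Q: "finite Q" "Q \<noteq> {}" and Q': "finite Q'" "Q' \<noteq> {}" using assms(2-9) by auto
  have abc: "0 \<le> a" "0 \<le> b" "0 \<le> 1 - a - b" using assms(10,12,14) by auto
  have marginal: "omega_marginal D alpha rho Q Q' a b \<omega> = sum (F \<omega>) (Pow ?E) / Z" if "\<omega> \<subseteq> ?E" for \<omega>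
    unfolding omega_marginal_eq sum_spin_pairs_eq_sum_coupled_weight[OF assms(1) Q(1) Q'(1) that] F_def Z_def ..
  have f_super: "?f A * ?f B \<le> ?f (A \<inter> B) * ?f (A \<union> B)" if "A \<subseteq> ?E" "B \<subseteq> ?E" for A B
    using primal_spin_count_supermodular[OF assms(1) Q that] by (metis of_nat_mono of_nat_mult)
  have g_super: "?g A * ?g B \<le> ?g (A \<inter> B) * ?g (A \<union> B)" if "A \<subseteq> ?E" "B \<subseteq> ?E" for A B
    using dual_spin_count_supermodular[OF assms(1) Q' that] by (metis of_nat_mono of_nat_mult)
  have "sum (F xi1) (Pow ?E) * sum (F xi2) (Pow ?E)
        \<le> sum (F (xi1 \<inter> xi2)) (Pow ?E) * sum (F (xi1 \<union> xi2)) (Pow ?E)"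
    unfolding F_def using comb_map_finite(1)[OF assms(1)] assms(15,16)
    by (intro ahlswede_daykin_four_functions coupled_weight_log_supermodular[OF abc] f_super g_super
        conjI coupled_weight_nonneg[OF abc]) auto
  moreover have "xi1 \<inter> xi2 \<subseteq> ?E" "xi1 \<union> xi2 \<subseteq> ?E" using assms(15,16) by auto
  ultimately show ?thesis
    using marginal assms(15,16) by (simp add: divide_right_mono)
qed

end
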